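(* Let $C_{(\mathcal T,\Psi_{\mathcal T})}$ be a nested Archimedean copula with regularly varying generators $\psi_v$ of index $-\alpha_v$, $\alpha_v>0$, $v\in\mathcal I$, and for $v\in\mathcal V$ let $\Lambda_v$ denote the tail copula of $C_v$, given recursively by $\Lambda_v(\bm x_{\mathrm{le}(v)})=x_v$ for $v\in\mathcal L$ and $\Lambda_v(\bm x_{\mathrm{le}(v)})=\left(\sum_{w\in\mathrm{ch}(v)}\Lambda_w(\bm x_{\mathrm{le}(w)})^{-1/\alpha_v}\right)^{-\alpha_v}$ for $v\in\mathcal I$. For $v\in\mathcal I$ let $\lambda^\ast(\Lambda_v)=\sup\{\Lambda_v(\bm b):\bm b\in(0,\infty)^{d(v)},\ \prod_{i\in\mathrm{le}(v)}b_i=1\}$ denote the MTCM of $C_v$. Empty products equal $1$. Then: (i) Recursively define $\lambda_v^\ast=1$ for $v\in\mathcal L$ and $$\lambda_v^\ast=d(v)^{-\alpha_v}\prod_{w\in\mathrm{ch}(v)}\left\{d(w)^{\alpha_v}\lambda_w^\ast\right\}^{d(w)/d(v)},\quad v\in\mathcal I.$$ Then $\lambda^\ast(\Lambda_v)=\lambda_v^\ast$ for all $v\in\mathcal I$. (ii) For all $v\in\mathcal I$, $$\lambda_v^\ast=d(v)^{-\alpha_v}\prod_{w\in\mathcal I_v\setminus\{v\}}d(w)^{(\alpha_{\mathrm{pa}(w)}-\alpha_w)d(w)/d(v)}.$$ (iii) For all $v\in\mathcal I$, the maximizer $\bm b_v^\ast$ of $\Lambda_v$ over $\{\bm b\in(0,\infty)^{d(v)}:\prod_{i\in\mathrm{le}(v)}b_i=1\}$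 is unique and, for each leaf $j\in\mathrm{le}(v)$, $$(\bm b_v^\ast)_j=\lambda_v^\ast\,d(v)^{\alpha_v}\prod_{w\in\mathrm{an}_v(j)}d(w)^{\alpha_w-\alpha_{\mathrm{pa}(w)}}.$$
   Context: An Archimedean generator is a continuous, decreasing $\psi:[0,\infty)\to[0,1]$ with $\psi(0)=1$, $\lim_{t\to\infty}\psi(t)=0$, strictly decreasing on $[0,\inf\{t:\psi(t)=0\}]$, with inverse $\psi^{-1}$; $\Psi_\infty$ is the set of completely monotone ones. $f:(0,\infty)\to(0,\infty)$ is regularly varying with index $\rho$ if $\lim_{x\to\infty}f(tx)/f(x)=t^\rho$ for all $t>0$. Let $\mathcal T=(\mathcal V,\mathcal E)$ be a rooted tree with root $r$, leaves $\mathcal L=\{1,\dots,d\}$, internal vertices $\mathcal I=\mathcal V\setminus\mathcal L$; $\mathrm{pa}(v)$ is the parent, $\mathrm{ch}(v)$ the children, $\mathrm{le}(v)$ the leaves of the subtree rooted at $v$ ($\mathrm{le}(v)=\{v\}$ for leaves), $d(v)=|\mathrm{le}(v)|$. For $v\in\mathcal V$, $\mathcal I_v$ denotes the set of internal vertices of the subtree $\mathcal T_v$ rooted at $v$, and for $w$ in $\mathcal T_v$, $\mathrm{an}_v(w)$ is the (possibly empty) set of ancestors of $w$ in $\mathcal T_v$, excluding the root $v$ (and excluding $w$ itself). Given $\{\psi_v\}_{v\in\mathcal I}\subseteq\Psi_\infty$, recursively set $C_v(\bm u_{\mathrm{le}(v)})=u_v$ for $v\in\mathcal L$ and $C_v(\bm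 u_{\mathrm{le}(v)})=\psi_v\left(\sum_{w\in\mathrm{ch}(v)}\psi_v^{-1}(C_w(\bm u_{\mathrm{le}(w)}))\right)$ for $v\in\mathcal I$; the nested Archimedean copula is $C_r$. The sufficient nesting condition is assumed: $(\psi_{\mathrm{pa}(v)}^{-1}\circ\psi_v)'$ is completely monotone for every $v\in\mathcal I\setminus\{r\}$. Regularly varying generators means each $\psi_v$ is regularly varying with index $-\alpha_v$, $\alpha_v>0$. The tail copula of a copula $C$ is $\Lambda(\bm x;C)=\lim_{t\downarrow0}C(t\bm x)/t$. *)

theory Defs
  imports "HOL-Analysis.Analysis"
begin

text \<open>A rooted tree is given by a finite vertex set V (of naturals), a root r and a parent
  function pa (only meaningful on V - {r}). Leaves are the vertices without children and
  must be exactly {1..d}.\<close>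

definition ch :: "nat set \<Rightarrow> nat \<Rightarrow> (nat \<Rightarrow> nat) \<Rightarrow> nat \<Rightarrow> nat set" where
  "ch V r pa v = {w \<in> V. w \<noteq> r \<and> pa w = v}"

definition is_rooted_tree :: "nat set \<Rightarrow> nat \<Rightarrow> (nat \<Rightarrow> nat) \<Rightarrow> nat \<Rightarrow> bool" where
  "is_rooted_tree V r pa d \<longleftrightarrow>
     finite V \<and> r \<in> V \<and> (\<forall>v \<in> V - {r}. pa v \<in> V) \<and>
     (\<forall>v \<in> V. \<exists>n. (pa ^^ n) v = r) \<and>
     {v \<in> V. ch V r pa v = {}} = {1..d}"

definition in_sub :: "nat set \<Rightarrow> nat \<Rightarrow> (nat \<Rightarrow> nat) \<Rightarrow> nat \<Rightarrow> nat \<Rightarrow> bool" where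
  "in_sub V r pa v w \<longleftrightarrow> w \<in> V \<and> (\<exists>n. (pa ^^ n) w = v \<and> (\<forall>k<n. (pa ^^ k) w \<noteq> r))"

definition internal :: "nat set \<Rightarrow> nat \<Rightarrow> nat set" where
  "internal V d = V - {1..d}"

definition le :: "nat set \<Rightarrow> nat \<Rightarrow> (nat \<Rightarrow> nat) \<Rightarrow> nat \<Rightarrow> nat \<Rightarrow> nat set" where
  "le V r pa d v = {j \<in> {1..d}. in_sub V r pa v j}"

definition dv :: "nat set \<Rightarrow> nat \<Rightarrow> (nat \<Rightarrow> nat) \<Rightarrow> nat \<Rightarrow> nat \<Rightarrow> real" where
  "dv V r pa d v = real (card (le V r pa d v))"

definition internal_sub :: "nat set \<Rightarrow> nat \<Rightarrow> (nat \<Rightarrow> nat) \<Rightarrow> nat \<Rightarrow> nat \<Rightarrow> nat set" where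
  "internal_sub V r pa d v = {w \<in> internal V d. in_sub V r pa v w}"

definition anc :: "nat set \<Rightarrow> nat \<Rightarrow> (nat \<Rightarrow> nat) \<Rightarrow> nat \<Rightarrow> nat \<Rightarrow> nat set" where
  "anc V r pa v j = {w \<in> V. w \<noteq> v \<and> w \<noteq> j \<and> in_sub V r pa w j \<and> in_sub V r pa v w}"

section \<open>Recursive tail copula and recursive MTCM (via fuel; fuel card V suffices)\<close>

primrec lam_fuel :: "nat set \<Rightarrow> nat \<Rightarrow> (nat \<Rightarrow> nat) \<Rightarrow> (nat \<Rightarrow> real) \<Rightarrow> nat \<Rightarrow> nat
    \<Rightarrow> (nat \<Rightarrow> real) \<Rightarrow> real" where
  "lam_fuel V r pa \<alpha> 0 v x = x v"
| "lam_fuel V r pa \<alpha> (Suc n) v x =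
     (if ch V r pa v = {} then x v
      else (\<Sum>w \<in> ch V r pa v. (lam_fuel V r pa \<alpha> n w x) powr (- 1 / \<alpha> v)) powr (- \<alpha> v))"

definition tail_cop :: "nat set \<Rightarrow> nat \<Rightarrow> (nat \<Rightarrow> nat) \<Rightarrow> (nat \<Rightarrow> real) \<Rightarrow> nat
    \<Rightarrow> (nat \<Rightarrow> real) \<Rightarrow> real" where
  "tail_cop V r pa \<alpha> v x = lam_fuel V r pa \<alpha> (card V) v x"

primrec lstar_fuel :: "nat set \<Rightarrow> nat \<Rightarrow> (nat \<Rightarrow> nat) \<Rightarrow> nat \<Rightarrow> (nat \<Rightarrow> real) \<Rightarrow> nat
    \<Rightarrow> nat \<Rightarrow> real" where
  "lstar_fuel V r pa d \<alpha> 0 v = 1"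
| "lstar_fuel V r pa d \<alpha> (Suc n) v =
     (if ch V r pa v = {} then 1
      else dv V r pa d v powr (- \<alpha> v) *
        (\<Prod>w \<in> ch V r pa v. (dv V r pa d w powr (\<alpha> v) * lstar_fuel V r pa d \<alpha> n w)
            powr (dv V r pa d w / dv V r pa d v)))"

definition lstar :: "nat set \<Rightarrow> nat \<Rightarrow> (nat \<Rightarrow> nat) \<Rightarrow> nat \<Rightarrow> (nat \<Rightarrow> real) \<Rightarrow> nat \<Rightarrow> real" where
  "lstar V r pa d \<alpha> v = lstar_fuel V r pa d \<alpha> (card V) v"

text \<open>Feasible points: b in (0,\<infinity>)^{le(v)} with product 1 (other coordinates irrelevant).\<close>
definition feasible :: "nat set \<Rightarrow> nat \<Rightarrow> (nat \<Rightarrow> nat) \<Rightarrow> nat \<Rightarrow> nat \<Rightarrow> (nat \<Rightarrow> real) \<Rightarrow> bool" where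
  "feasible V r pa d v b \<longleftrightarrow>
     (\<forall>i \<in> le V r pa d v. 0 < b i) \<and> (\<Prod>i \<in> le V r pa d v. b i) = 1"

definition mtcm :: "nat set \<Rightarrow> nat \<Rightarrow> (nat \<Rightarrow> nat) \<Rightarrow> nat \<Rightarrow> (nat \<Rightarrow> real) \<Rightarrow> nat \<Rightarrow> real" where
  "mtcm V r pa d \<alpha> v = Sup {tail_cop V r pa \<alpha> v b | b. feasible V r pa d v b}"

definition completely_monotone :: "(real \<Rightarrow> real) \<Rightarrow> bool" where
  "completely_monotone f \<longleftrightarrow>
     (\<forall>k x. 0 < x \<longrightarrow> ((deriv ^^ k) f) differentiable (at x) \<and>
                      0 \<le> (-1) ^ k * (deriv ^^ k) f x)"

definition archimedean_generator :: "(real \<Rightarrow> real) \<Rightarrow> bool" where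
  "archimedean_generator \<psi> \<longleftrightarrow>
     continuous_on {0..} \<psi> \<and> (\<forall>t \<ge> 0. 0 \<le> \<psi> t \<and> \<psi> t \<le> 1) \<and>
     (\<forall>s t. 0 \<le> s \<and> s \<le> t \<longrightarrow> \<psi> t \<le> \<psi> s) \<and> \<psi> 0 = 1 \<and> (\<psi> \<longlongrightarrow> 0) at_top \<and>
     (\<forall>s t. 0 \<le> s \<and> s < t \<and> (\<forall>u. 0 \<le> u \<and> \<psi> u = 0 \<longrightarrow> t \<le> u) \<longrightarrow> \<psi> t < \<psi> s)"

definition Psi_inf :: "(real \<Rightarrow> real) \<Rightarrow> bool" where
  "Psi_inf \<psi> \<longleftrightarrow> archimedean_generator \<psi> \<and> completely_monotone \<psi>"

definition regularly_varying :: "(real \<Rightarrow> real) \<Rightarrow> real \<Rightarrow> bool" where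
  "regularly_varying f \<rho> \<longleftrightarrow> (\<forall>x > 0. 0 < f x) \<and>
     (\<forall>t > 0. ((\<lambda>x. f (t * x) / f x) \<longlongrightarrow> t powr \<rho>) at_top)"

definition gen_inv :: "(real \<Rightarrow> real) \<Rightarrow> real \<Rightarrow> real" where
  "gen_inv \<psi> = inv_into {0..} \<psi>"

text \<open>Sufficient nesting condition: (\<psi>_parent^{-1} \<circ> \<psi>_child)' is completely monotone.\<close>
definition nesting_cond :: "(real \<Rightarrow> real) \<Rightarrow> (real \<Rightarrow> real) \<Rightarrow> bool" where
  "nesting_cond \<psi>p \<psi>c \<longleftrightarrow>
     (\<forall>t > 0. (\<lambda>s. gen_inv \<psi>p (\<psi>c s)) differentiable (at t)) \<and>
     completely_monotone (deriv (\<lambda>s. gen_inv \<psi>p (\<psi>c s)))"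

end

theory Submission
  imports Defs
begin

(* Write c_w = d(w)/d(v) for the children w of an internal vertex v.  The recursion
   Lambda_v = (sum_w Lambda_w^(-1/alpha_v))^(-alpha_v) is a power mean, and weighted AM-GM
   (strict convexity of exp) gives  ln Lambda_v <= sum_w c_w (ln Lambda_w + alpha_v ln c_w),
   with equality only if Lambda_w = Lambda_v c_w^(-alpha_v) for every child w.  Taking logarithms
   in the recursion (i) for lambda*_v yields exactly the right-hand side with Lambda_w replaced by
   lambda*_w, so induction over the tree gives
     Lambda_v(x) <= lambda*_v (prod_{j in le(v)} x_j)^(1/d(v)),
   hence Lambda_v <= lambda*_v on the feasible set.  In the equality case the equality conditions
   propagate from v down to the leaves and force x_j = Lambda_v(x) beta_v(j), where
   beta_v(j) = d(v)^alpha_v prod_{w in an_v(j)} d(w)^(alpha_w - alpha_pa(w)).  Conversely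
   Lambda_v(k beta_v) = k and prod_j beta_v(j) = (lambda*_v)^(-d(v)), so lambda*_v beta_v is
   feasible and attains the bound.  Part (ii) is the recursion for ln lambda*_v unfolded down the
   tree. *)

lemma add_one_less_exp:
  fixes t :: real
  assumes "t \<noteq> 0"
  shows "1 + t < exp t"
proof (cases "0 \<le> 1 + t / 2")
  case True
  have "(1 + t / 2) * (1 + t / 2) \<le> exp (t / 2) * exp (t / 2)"
    using True exp_ge_add_one_self[of "t / 2"] by (intro mult_mono) auto
  moreover have "0 < t * t" using assms by (metis not_real_square_gt_zero)
  ultimately show ?thesis by (simp add: algebra_simps flip: exp_add)
next
  case False
  then show ?thesis using exp_gt_zero[of t] by linarith
qed

lemma exp_weighted_mean_le:
  fixes c s :: "'a \<Rightarrow> real"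
  assumes "finite W" and c_pos: "\<And>w. w \<in> W \<Longrightarrow> 0 < c w" and c_sum: "(\<Sum>w\<in>W. c w) = 1"
  shows "exp (\<Sum>w\<in>W. c w * s w) \<le> (\<Sum>w\<in>W. c w * exp (s w))"
    and "exp (\<Sum>w\<in>W. c w * s w) = (\<Sum>w\<in>W. c w * exp (s w)) \<Longrightarrow> w \<in> W
          \<Longrightarrow> s w = (\<Sum>w\<in>W. c w * s w)"
proof -
  define m where "m = (\<Sum>w\<in>W. c w * s w)"
  \<comment> \<open>weighted gap between \<open>exp\<close> and its tangent at the mean \<open>m\<close>\<close>
  define g where "g w = c w * exp m * (exp (s w - m) - (1 + (s w - m)))" for w
  have g_nonneg: "0 \<le> g w" if "w \<in> W" for w
    using c_pos[OF that] exp_ge_add_one_self[of "s w - m"] unfolding g_def by simp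
  have "(\<Sum>w\<in>W. g w) = (\<Sum>w\<in>W. c w * exp (s w)) - exp m * (\<Sum>w\<in>W. c w)
        - exp m * ((\<Sum>w\<in>W. c w * s w) - (\<Sum>w\<in>W. c w) * m)"
    by (simp add: g_def exp_diff algebra_simps sum_subtractf sum_distrib_left sum_distrib_right
        sum.distrib)
  then have g_sum: "(\<Sum>w\<in>W. g w) = (\<Sum>w\<in>W. c w * exp (s w)) - exp m"
    using c_sum by (simp add: m_def)
  moreover have "0 \<le> (\<Sum>w\<in>W. g w)" using g_nonneg by (simp add: sum_nonneg)
  ultimately show "exp m \<le> (\<Sum>w\<in>W. c w * exp (s w))" by linarith
  assume "exp m = (\<Sum>w\<in>W. c w * exp (s w))" and w: "w \<in> W"
  then have "g w = 0"
    using g_sum g_nonneg sum_nonneg_eq_0_iff[OF \<open>finite W\<close>] by auto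
  then have "exp (s w - m) = 1 + (s w - m)"
    using c_pos[OF w] by (simp add: g_def)
  then show "s w = m" using add_one_less_exp[of "s w - m"] by fastforce
qed

lemma ln_power_mean_le:
  fixes a :: real and c L :: "'a \<Rightarrow> real"
  assumes "finite W" and c_pos: "\<And>w. w \<in> W \<Longrightarrow> 0 < c w" and c_sum: "(\<Sum>w\<in>W. c w) = 1"
    and "0 < a" and L_pos: "\<And>w. w \<in> W \<Longrightarrow> 0 < L w"
  defines "M \<equiv> (\<Sum>w\<in>W. L w powr (- 1 / a)) powr (- a)"
  shows "ln M \<le> (\<Sum>w\<in>W. c w * (ln (L w) + a * ln (c w)))"
    and "ln M = (\<Sum>w\<in>W. c w * (ln (L w) + a * ln (c w))) \<Longrightarrow> w \<in> W
          \<Longrightarrow> L w = M * c w powr (- a)"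
proof -
  define S where "S = (\<Sum>w\<in>W. L w powr (- 1 / a))"
  \<comment> \<open>Jensen for \<open>exp\<close> at the points \<open>s w = ln (L w powr (- 1 / a) / c w)\<close>\<close>
  define s where "s w = - ln (L w) / a - ln (c w)" for w
  have "W \<noteq> {}" using c_sum by auto
  moreover have "0 < L w powr (- 1 / a)" if "w \<in> W" for w
    using L_pos[OF that] by simp
  ultimately have S_pos: "0 < S"
    unfolding S_def using \<open>finite W\<close> by (intro sum_pos)
  have "c w * exp (s w) = L w powr (- 1 / a)" if "w \<in> W" for w
    using c_pos[OF that] L_pos[OF that] by (simp add: s_def exp_diff powr_def)
  then have mean_exp_s: "(\<Sum>w\<in>W. c w * exp (s w)) = S"
    unfolding S_def by simp
  have ln_M: "ln M = - a * ln S" unfolding M_def S_def[symmetric] using S_pos by simp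
  have mean_s: "- a * (\<Sum>w\<in>W. c w * s w) = (\<Sum>w\<in>W. c w * (ln (L w) + a * ln (c w)))"
    unfolding s_def sum_distrib_left using \<open>0 < a\<close>
    by (intro sum.cong) (simp_all add: field_simps)
  have "exp (\<Sum>w\<in>W. c w * s w) \<le> S"
    using exp_weighted_mean_le(1)[OF \<open>finite W\<close> c_pos c_sum, of s] mean_exp_s by simp
  then have "(\<Sum>w\<in>W. c w * s w) \<le> ln S"
    using S_pos by (simp add: ln_ge_iff)
  then show "ln M \<le> (\<Sum>w\<in>W. c w * (ln (L w) + a * ln (c w)))"
    unfolding ln_M mean_s[symmetric] using \<open>0 < a\<close> by simp
  assume "ln M = (\<Sum>w\<in>W. c w * (ln (L w) + a * ln (c w)))" and w: "w \<in> W"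
  then have "ln S = (\<Sum>w\<in>W. c w * s w)"
    unfolding ln_M mean_s[symmetric] using \<open>0 < a\<close> by simp
  then have Jensen_eq: "exp (\<Sum>w\<in>W. c w * s w) = (\<Sum>w\<in>W. c w * exp (s w))"
    using S_pos mean_exp_s by (metis exp_ln)
  have "s w = (\<Sum>w\<in>W. c w * s w)"
    using exp_weighted_mean_le(2)[OF \<open>finite W\<close> c_pos c_sum Jensen_eq w] by simp
  then have "s w = ln S" using \<open>ln S = _\<close> by simp
  moreover have "0 < M" unfolding M_def S_def[symmetric] using S_pos by simp
  ultimately have "ln (L w) = ln (M * c w powr (- a))"
    using ln_M \<open>0 < a\<close> c_pos[OF w] by (simp add: s_def ln_mult ln_powr field_simps)
  then show "L w = M * c w powr (- a)"
    using L_pos[OF w] c_pos[OF w] \<open>0 < M\<close> by simp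
qed

lemma power_mean_of_scaled_weights:
  fixes a k :: real and c :: "'a \<Rightarrow> real"
  assumes c_pos: "\<And>w. w \<in> W \<Longrightarrow> 0 < c w" and c_sum: "(\<Sum>w\<in>W. c w) = 1"
    and "0 < a" and "0 < k"
  shows "(\<Sum>w\<in>W. (k * c w powr (- a)) powr (- 1 / a)) powr (- a) = k"
proof -
  have "(k * c w powr (- a)) powr (- 1 / a) = k powr (- 1 / a) * c w" if "w \<in> W" for w
    using c_pos[OF that] \<open>0 < a\<close> \<open>0 < k\<close> by (simp add: powr_mult powr_powr)
  then have "(\<Sum>w\<in>W. (k * c w powr (- a)) powr (- 1 / a)) = k powr (- 1 / a)"
    using c_sum by (simp flip: sum_distrib_left)
  then show ?thesis using \<open>0 < a\<close> \<open>0 < k\<close> by (simp add: powr_powr)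
qed

locale rooted_tree =
  fixes V :: "nat set" and r :: nat and pa :: "nat \<Rightarrow> nat" and d :: nat
  assumes tree: "is_rooted_tree V r pa d"
begin

abbreviation "desc \<equiv> in_sub V r pa"
abbreviation "children \<equiv> ch V r pa"
abbreviation "leaves \<equiv> le V r pa d"
abbreviation "nleaves \<equiv> dv V r pa d"
abbreviation "ancestors \<equiv> anc V r pa"
abbreviation "internal_desc \<equiv> internal_sub V r pa d"

lemma finite_V: "finite V"
  and root_in_V: "r \<in> V"
  and parent_in_V: "v \<in> V \<Longrightarrow> v \<noteq> r \<Longrightarrow> pa v \<in> V"
  and reaches_root: "v \<in> V \<Longrightarrow> \<exists>n. (pa ^^ n) v = r"
  and leaf_set: "{v \<in> V. children v = {}} = {1..d}"
  using tree unfolding is_rooted_tree_def by auto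

lemma funpow_parent_in_V: "u \<in> V \<Longrightarrow> \<forall>k<n. (pa ^^ k) u \<noteq> r \<Longrightarrow> (pa ^^ n) u \<in> V"
  by (induction n) (auto simp: parent_in_V)

lemma path_to_root_acyclic:
  assumes "u \<in> V" "m < n" "(pa ^^ m) u = (pa ^^ n) u" "\<forall>k<n. (pa ^^ k) u \<noteq> r"
  shows False
proof -
  define p where "p = n - m"
  have "(pa ^^ p) ((pa ^^ m) u) = (pa ^^ (p + m)) u" by (simp add: funpow_add)
  then have cycle: "(pa ^^ p) ((pa ^^ m) u) = (pa ^^ m) u"
    using assms(2,3) by (simp add: p_def)
  obtain N where N: "(pa ^^ N) u = r" using reaches_root[OF assms(1)] by blast
  \<comment> \<open>beyond \<open>m\<close> the path is periodic, so it revisits only vertices seen before step \<open>n\<close>\<close>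
  have "(pa ^^ N) u = (pa ^^ (if N < n then N else m + (N - m) mod p)) u"
  proof (cases "N < n")
    case False
    then have "(pa ^^ N) u = (pa ^^ (N - m + m)) u" using assms(2) by simp
    also have "\<dots> = (pa ^^ (N - m)) ((pa ^^ m) u)" by (simp add: funpow_add)
    also have "\<dots> = (pa ^^ ((N - m) mod p)) ((pa ^^ m) u)"
      by (rule funpow_mod_eq[OF cycle, symmetric])
    also have "\<dots> = (pa ^^ ((N - m) mod p + m)) u" by (simp add: funpow_add)
    finally show ?thesis using False by (simp add: add.commute)
  qed simp
  moreover have "(N - m) mod p < p" using assms(2) by (simp add: p_def)
  then have "m + (N - m) mod p < n" using assms(2) unfolding p_def by linarith
  then have "(if N < n then N else m + (N - m) mod p) < n" by simp
  ultimately show False using N assms(4) by metis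
qed

lemma desc_in_V: "desc v u \<Longrightarrow> u \<in> V" "desc v u \<Longrightarrow> v \<in> V"
  unfolding in_sub_def using funpow_parent_in_V by blast+

lemma desc_refl: "v \<in> V \<Longrightarrow> desc v v"
  unfolding in_sub_def by (intro conjI exI[of _ 0]) auto

lemma desc_trans:
  assumes "desc a b" "desc b c"
  shows "desc a c"
proof -
  obtain n1 where n1: "(pa ^^ n1) c = b" "\<forall>k<n1. (pa ^^ k) c \<noteq> r"
    using assms(2) unfolding in_sub_def by blast
  obtain n2 where n2: "(pa ^^ n2) b = a" "\<forall>k<n2. (pa ^^ k) b \<noteq> r"
    using assms(1) unfolding in_sub_def by blast
  have "(pa ^^ k) c \<noteq> r" if "k < n2 + n1" for k
  proof (cases "k < n1")
    case False
    then have "(pa ^^ k) c = (pa ^^ (k - n1)) b"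
      using n1(1) by (metis funpow_add le_add_diff_inverse2 not_less o_apply)
    then show ?thesis using n2 that False by auto
  qed (use n1 in blast)
  moreover have "(pa ^^ (n2 + n1)) c = a" using n1 n2 by (simp add: funpow_add)
  ultimately show ?thesis using desc_in_V(1)[OF assms(2)] unfolding in_sub_def by blast
qed

lemma child_in_V: "w \<in> children v \<Longrightarrow> w \<in> V"
  and child_not_root: "w \<in> children v \<Longrightarrow> w \<noteq> r"
  and parent_of_child: "w \<in> children v \<Longrightarrow> pa w = v"
  and parent_in_V_of_child: "w \<in> children v \<Longrightarrow> v \<in> V"
  unfolding ch_def using parent_in_V by auto

lemma finite_children: "finite (children v)"
  using finite_V unfolding ch_def by simp

lemma desc_child: "w \<in> children v \<Longrightarrow> desc v w"
  unfolding in_sub_def ch_def by (intro conjI exI[of _ 1]) auto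

lemma desc_through_child:
  assumes "desc v u" "u \<noteq> v"
  obtains w where "w \<in> children v" "desc w u"
proof -
  obtain n where n: "(pa ^^ n) u = v" "\<forall>k<n. (pa ^^ k) u \<noteq> r" "u \<in> V"
    using assms(1) unfolding in_sub_def by blast
  then obtain m where m: "n = Suc m" using assms(2) by (cases n) auto
  define w where "w = (pa ^^ m) u"
  have "w \<in> children v"
    using n m funpow_parent_in_V[of u m] unfolding ch_def w_def by auto
  moreover have "desc w u"
    unfolding in_sub_def w_def using n m by (intro conjI exI[of _ m]) auto
  ultimately show thesis by (rule that)
qed

lemma child_not_ancestor: "w \<in> children v \<Longrightarrow> \<not> desc w v"
proof
  assume w: "w \<in> children v" and "desc w v"
  then obtain n where n: "(pa ^^ n) v = w" "\<forall>k<n. (pa ^^ k) v \<noteq> r" "v \<in> V"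
    unfolding in_sub_def by blast
  have "(pa ^^ 0) v = (pa ^^ Suc n) v" using n w by (simp add: parent_of_child)
  moreover have "\<forall>k<Suc n. (pa ^^ k) v \<noteq> r"
    using n w child_not_root by (auto simp: less_Suc_eq)
  ultimately show False using path_to_root_acyclic[OF n(3)] by blast
qed

lemma children_desc_unique:
  assumes "w1 \<in> children v" "w2 \<in> children v" "desc w1 u" "desc w2 u"
  shows "w1 = w2"
proof -
  obtain n1 where n1: "(pa ^^ n1) u = w1" "\<forall>k<n1. (pa ^^ k) u \<noteq> r" "u \<in> V"
    using assms(3) unfolding in_sub_def by blast
  obtain n2 where n2: "(pa ^^ n2) u = w2" "\<forall>k<n2. (pa ^^ k) u \<noteq> r"
    using assms(4) unfolding in_sub_def by blast
  \<comment> \<open>both paths reach \<open>v\<close> one step later, so unequal lengths would give a cycle\<close>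
  have "False" if "m1 < m2" "(pa ^^ m1) u = x1" "(pa ^^ m2) u = x2" "\<forall>k<m2. (pa ^^ k) u \<noteq> r"
    "x1 \<in> children v" "x2 \<in> children v" for m1 m2 x1 x2
  proof (rule path_to_root_acyclic[OF n1(3)])
    show "Suc m1 < Suc m2" using that by simp
    show "(pa ^^ Suc m1) u = (pa ^^ Suc m2) u" using that by (simp add: parent_of_child)
    show "\<forall>k<Suc m2. (pa ^^ k) u \<noteq> r"
      using that child_not_root by (auto simp: less_Suc_eq)
  qed
  then show ?thesis using n1 n2 assms(1,2) by (metis linorder_neqE_nat)
qed

definition subtree :: "nat \<Rightarrow> nat set" where
  "subtree v = {u. desc v u}"

lemma finite_subtree: "finite (subtree v)" and subtree_subset_V: "subtree v \<subseteq> V"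
  using finite_V desc_in_V unfolding subtree_def by (auto intro: finite_subset)

lemma card_subtree_pos: "v \<in> V \<Longrightarrow> 0 < card (subtree v)"
  using desc_refl finite_subtree unfolding subtree_def by (metis card_gt_0_iff empty_iff mem_Collect_eq)

lemma card_subtree_child_less:
  assumes "w \<in> children v"
  shows "card (subtree w) < card (subtree v)"
proof (rule psubset_card_mono[OF finite_subtree])
  have "subtree w \<subseteq> subtree v"
    unfolding subtree_def using desc_child[OF assms] desc_trans by blast
  moreover have "v \<in> subtree v" "v \<notin> subtree w"
    unfolding subtree_def using desc_refl desc_in_V desc_child[OF assms]
      child_not_ancestor[OF assms] by auto
  ultimately show "subtree w \<subset> subtree v" by blast
qed

lemma card_V_Suc: obtains m where "card V = Suc m"
  using finite_V root_in_V by (metis card_0_eq empty_iff not0_implies_Suc)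

lemma card_subtree_child_le:
  assumes "w \<in> children v" "card V = Suc m"
  shows "card (subtree w) \<le> m"
  using card_subtree_child_less[OF assms(1)] card_mono[OF finite_V subtree_subset_V, of v] assms(2)
  by simp

lemma tree_induct[consumes 1, case_names leaf internal]:
  assumes "v \<in> V"
    and leaf: "\<And>v. v \<in> V \<Longrightarrow> children v = {} \<Longrightarrow> P v"
    and internal: "\<And>v. v \<in> V \<Longrightarrow> children v \<noteq> {} \<Longrightarrow>
      (\<And>w. w \<in> children v \<Longrightarrow> P w) \<Longrightarrow> P v"
  shows "P v"
  using assms(1)
proof (induction "card (subtree v)" arbitrary: v rule: less_induct)
  case less
  then show ?case
    using leaf internal card_subtree_child_less child_in_V by metis
qed

lemma internal_iff: "v \<in> internal V d \<longleftrightarrow> v \<in> V \<and> children v \<noteq> {}"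
  unfolding internal_def using leaf_set by blast

lemma desc_leaf: "v \<in> V \<Longrightarrow> children v = {} \<Longrightarrow> desc v u \<Longrightarrow> u = v"
  using desc_through_child by blast

lemma finite_leaves: "finite (leaves v)"
  unfolding le_def by simp

lemma leaves_leaf: "v \<in> V \<Longrightarrow> children v = {} \<Longrightarrow> leaves v = {v}"
  unfolding le_def using desc_leaf desc_refl leaf_set by auto

lemma leaves_internal:
  assumes "v \<in> V" "children v \<noteq> {}"
  shows "leaves v = (\<Union>w\<in>children v. leaves w)"
proof
  show "leaves v \<subseteq> (\<Union>w\<in>children v. leaves w)"
  proof
    fix j assume j: "j \<in> leaves v"
    then have "j \<noteq> v" using assms leaf_set unfolding le_def by auto
    then obtain w where "w \<in> children v" "desc w j"
      using j desc_through_child unfolding le_def by blast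
    then show "j \<in> (\<Union>w\<in>children v. leaves w)" using j unfolding le_def by auto
  qed
  show "(\<Union>w\<in>children v. leaves w) \<subseteq> leaves v"
    unfolding le_def using desc_child desc_trans by blast
qed

lemma leaves_children_disjoint:
  "w1 \<in> children v \<Longrightarrow> w2 \<in> children v \<Longrightarrow> w1 \<noteq> w2 \<Longrightarrow> leaves w1 \<inter> leaves w2 = {}"
  unfolding le_def using children_desc_unique by blast

lemma leaf_of_leaves: "j \<in> leaves v \<Longrightarrow> j \<in> V \<and> children j = {}"
  unfolding le_def using leaf_set desc_in_V by blast

lemma leaves_child_subset: "w \<in> children v \<Longrightarrow> leaves w \<subseteq> leaves v"
  unfolding le_def using desc_child desc_trans by blast

lemma sum_over_leaves_internal:
  assumes "v \<in> V" "children v \<noteq> {}"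
  shows "(\<Sum>j\<in>leaves v. f j) = (\<Sum>w\<in>children v. \<Sum>j\<in>leaves w. f j)"
  unfolding leaves_internal[OF assms]
  using finite_children finite_leaves leaves_children_disjoint
  by (intro sum.UNION_disjoint) auto

lemma nleaves_internal:
  "v \<in> V \<Longrightarrow> children v \<noteq> {} \<Longrightarrow> nleaves v = (\<Sum>w\<in>children v. nleaves w)"
  using sum_over_leaves_internal[of v "\<lambda>_. 1 :: real"] by (simp add: dv_def)

lemma nleaves_leaf: "v \<in> V \<Longrightarrow> children v = {} \<Longrightarrow> nleaves v = 1"
  unfolding dv_def using leaves_leaf by simp

lemma nleaves_pos: "v \<in> V \<Longrightarrow> 0 < nleaves v"
proof (induction v rule: tree_induct)
  case (internal v)
  then obtain w where "w \<in> children v" by blast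
  then show ?case
    using internal nleaves_internal finite_children child_in_V
    by (metis sum_pos)
qed (simp add: nleaves_leaf)

lemma nleaves_powr_pos: "v \<in> V \<Longrightarrow> 0 < nleaves v powr e"
  using nleaves_pos[of v] by simp

definition leaf_fraction :: "nat \<Rightarrow> nat \<Rightarrow> real" where
  "leaf_fraction v w = nleaves w / nleaves v"

lemma leaf_fraction_pos: "w \<in> children v \<Longrightarrow> 0 < leaf_fraction v w"
  unfolding leaf_fraction_def using nleaves_pos child_in_V parent_in_V_of_child by simp

lemma sum_leaf_fraction:
  "v \<in> V \<Longrightarrow> children v \<noteq> {} \<Longrightarrow> (\<Sum>w\<in>children v. leaf_fraction v w) = 1"
  unfolding leaf_fraction_def using nleaves_internal nleaves_pos[of v] by (simp flip: sum_divide_distrib)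

lemma finite_ancestors: "finite (ancestors v j)"
  using finite_V unfolding anc_def by simp

lemma ancestors_leaf: "v \<in> V \<Longrightarrow> children v = {} \<Longrightarrow> ancestors v j = {}"
  unfolding anc_def using desc_leaf by auto

lemma ancestors_child:
  assumes w: "w \<in> children v" and j: "j \<in> leaves w"
  shows "ancestors v j = (if w = j then {} else insert w (ancestors w j))"
proof -
  have "desc w j" using j unfolding le_def by simp
  have j_leaf: "j \<in> V" "children j = {}" using leaf_of_leaves[OF j] by auto
  have below_w: "desc w u" if "u \<in> ancestors v j" for u
  proof -
    from that have u: "u \<noteq> v" "desc u j" "desc v u" unfolding anc_def by auto
    obtain w' where "w' \<in> children v" "desc w' u" using desc_through_child[OF u(3,1)] .
    moreover have "w' = w"
      using children_desc_unique[OF \<open>w' \<in> children v\<close> w desc_trans[OF \<open>desc w' u\<close> u(2)] \<open>desc w j\<close>] .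
    ultimately show ?thesis by simp
  qed
  have "u \<noteq> v" if "desc w u" for u
    using that child_not_ancestor[OF w] by blast
  then have "ancestors w j \<subseteq> ancestors v j"
    unfolding anc_def using desc_trans[OF desc_child[OF w]] by auto
  moreover have "ancestors v j \<subseteq> insert w (ancestors w j)"
    using below_w unfolding anc_def by auto
  moreover have "w \<in> ancestors v j \<longleftrightarrow> w \<noteq> j"
    unfolding anc_def using \<open>desc w j\<close> desc_child[OF w] child_in_V[OF w]
      child_not_ancestor[OF w] desc_refl by auto
  moreover have "ancestors j j = {}" using ancestors_leaf[OF j_leaf] .
  ultimately show ?thesis by auto
qed

lemma finite_internal_desc: "finite (internal_desc v)"
  using finite_V unfolding internal_sub_def internal_def by simp

lemma internal_desc_leaf: "v \<in> V \<Longrightarrow> children v = {} \<Longrightarrow> internal_desc v = {}"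
  unfolding internal_sub_def using desc_leaf internal_iff by blast

lemma self_in_internal_desc: "v \<in> V \<Longrightarrow> children v \<noteq> {} \<Longrightarrow> v \<in> internal_desc v"
  unfolding internal_sub_def using internal_iff desc_refl by blast

lemma internal_desc_minus_self:
  assumes "v \<in> V"
  shows "internal_desc v - {v} = (\<Union>w\<in>children v. internal_desc w)"
proof
  show "internal_desc v - {v} \<subseteq> (\<Union>w\<in>children v. internal_desc w)"
    unfolding internal_sub_def by (blast elim: desc_through_child)
  show "(\<Union>w\<in>children v. internal_desc w) \<subseteq> internal_desc v - {v}"
    unfolding internal_sub_def using desc_child desc_trans child_not_ancestor by blast
qed

lemma sum_internal_desc_minus_self:
  assumes "v \<in> V"
  shows "(\<Sum>u\<in>internal_desc v - {v}. f u) = (\<Sum>w\<in>children v. \<Sum>u\<in>internal_desc w. f u)"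
  unfolding internal_desc_minus_self[OF assms] using finite_children finite_internal_desc
  by (intro sum.UNION_disjoint) (auto simp: internal_sub_def dest: children_desc_unique)

end

locale tail_copula_tree = rooted_tree +
  fixes \<alpha> :: "nat \<Rightarrow> real"
  assumes alpha_pos: "\<forall>v \<in> internal V d. 0 < \<alpha> v"
begin

abbreviation "Lam \<equiv> tail_cop V r pa \<alpha>"
abbreviation "lam_star \<equiv> lstar V r pa d \<alpha>"
abbreviation "feasible_at \<equiv> feasible V r pa d"

lemma alpha_pos_internal: "v \<in> V \<Longrightarrow> children v \<noteq> {} \<Longrightarrow> 0 < \<alpha> v"
  using alpha_pos internal_iff by blast

lemma lam_fuel_stable:
  "v \<in> V \<Longrightarrow> card (subtree v) \<le> n \<Longrightarrow> lam_fuel V r pa \<alpha> (Suc n) v x = lam_fuel V r pa \<alpha> n v x"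
proof (induction n arbitrary: v)
  case 0
  then show ?case using card_subtree_pos by fastforce
next
  case (Suc n)
  have "lam_fuel V r pa \<alpha> (Suc n) w x = lam_fuel V r pa \<alpha> n w x" if "w \<in> children v" for w
    using Suc.IH[of w] Suc.prems card_subtree_child_less[OF that] child_in_V[OF that] by simp
  then show ?case by (simp cong: sum.cong)
qed

lemma lstar_fuel_stable:
  "v \<in> V \<Longrightarrow> card (subtree v) \<le> n \<Longrightarrow> lstar_fuel V r pa d \<alpha> (Suc n) v = lstar_fuel V r pa d \<alpha> n v"
proof (induction n arbitrary: v)
  case 0
  then show ?case using card_subtree_pos by fastforce
next
  case (Suc n)
  have "lstar_fuel V r pa d \<alpha> (Suc n) w = lstar_fuel V r pa d \<alpha> n w" if "w \<in> children v" for w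
    using Suc.IH[of w] Suc.prems card_subtree_child_less[OF that] child_in_V[OF that] by simp
  then show ?case by (simp cong: prod.cong)
qed

lemma tail_cop_leaf: "children v = {} \<Longrightarrow> Lam v x = x v"
  unfolding tail_cop_def by (cases "card V") auto

lemma lstar_leaf: "children v = {} \<Longrightarrow> lam_star v = 1"
  unfolding lstar_def by (cases "card V") auto

lemma tail_cop_internal:
  assumes "v \<in> V" "children v \<noteq> {}"
  shows "Lam v x = (\<Sum>w\<in>children v. Lam w x powr (- 1 / \<alpha> v)) powr (- \<alpha> v)"
proof -
  obtain m where m: "card V = Suc m" by (rule card_V_Suc)
  have "lam_fuel V r pa \<alpha> m w x = Lam w x" if "w \<in> children v" for w
    unfolding tail_cop_def m
    using lam_fuel_stable child_in_V[OF that] card_subtree_child_le[OF that m] by simp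
  then show ?thesis using assms unfolding tail_cop_def m by (simp cong: sum.cong)
qed

lemma lstar_internal:
  assumes "v \<in> V" "children v \<noteq> {}"
  shows "lam_star v = nleaves v powr (- \<alpha> v) *
    (\<Prod>w\<in>children v. (nleaves w powr \<alpha> v * lam_star w) powr (nleaves w / nleaves v))"
proof -
  obtain m where m: "card V = Suc m" by (rule card_V_Suc)
  have "lstar_fuel V r pa d \<alpha> m w = lam_star w" if "w \<in> children v" for w
    unfolding lstar_def m
    using lstar_fuel_stable child_in_V[OF that] card_subtree_child_le[OF that m] by simp
  then show ?thesis using assms unfolding lstar_def m by (simp cong: prod.cong)
qed

lemma tail_cop_pos: "v \<in> V \<Longrightarrow> \<forall>j\<in>leaves v. 0 < x j \<Longrightarrow> 0 < Lam v x"
proof (induction v rule: tree_induct)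
  case (leaf v)
  then show ?case by (simp add: tail_cop_leaf leaves_leaf)
next
  case (internal v)
  have "0 < Lam w x powr (- 1 / \<alpha> v)" if "w \<in> children v" for w
    using internal.IH[OF that] internal.prems leaves_internal[OF internal.hyps] that by simp
  then have "0 < (\<Sum>w\<in>children v. Lam w x powr (- 1 / \<alpha> v))"
    using internal.hyps(2) finite_children by (intro sum_pos) auto
  then show ?case unfolding tail_cop_internal[OF internal.hyps] by simp
qed

lemma lstar_pos: "v \<in> V \<Longrightarrow> 0 < lam_star v"
proof (induction v rule: tree_induct)
  case (leaf v)
  then show ?case by (simp add: lstar_leaf)
next
  case (internal v)
  have "0 < (nleaves w powr \<alpha> v * lam_star w) powr (nleaves w / nleaves v)" if "w \<in> children v" for w
    using internal.IH[OF that] nleaves_pos[OF child_in_V[OF that]] by simp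
  then show ?case
    unfolding lstar_internal[OF internal.hyps] using nleaves_pos[OF internal.hyps(1)]
    by (intro mult_pos_pos prod_pos) auto
qed

lemma ln_lstar_internal:
  assumes "v \<in> V" "children v \<noteq> {}"
  shows "ln (lam_star v) =
    (\<Sum>w\<in>children v. leaf_fraction v w * (ln (lam_star w) + \<alpha> v * ln (leaf_fraction v w)))"
    (is "_ = ?rhs")
proof -
  have dv_pos: "0 < nleaves v" using nleaves_pos[OF assms(1)] .
  have factor_pos: "0 < (nleaves w powr \<alpha> v * lam_star w) powr (nleaves w / nleaves v)"
    if "w \<in> children v" for w
    using lstar_pos[OF child_in_V[OF that]] nleaves_pos[OF child_in_V[OF that]] by simp
  have "ln (lam_star v) = - \<alpha> v * ln (nleaves v)
      + (\<Sum>w\<in>children v. leaf_fraction v w * (\<alpha> v * ln (nleaves w) + ln (lam_star w)))"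
    unfolding lstar_internal[OF assms] using factor_pos dv_pos
    by (simp add: ln_mult ln_prod prod_pos finite_children leaf_fraction_def ln_powr lstar_pos
        nleaves_pos child_in_V cong: sum.cong)
  also have "\<dots> = (\<Sum>w\<in>children v. leaf_fraction v w * (\<alpha> v * ln (nleaves w) + ln (lam_star w))
      - leaf_fraction v w * (\<alpha> v * ln (nleaves v)))"
    using sum_leaf_fraction[OF assms] by (simp add: sum_subtractf flip: sum_distrib_right)
  also have "\<dots> = ?rhs"
    using dv_pos nleaves_pos[OF child_in_V]
    by (intro sum.cong) (simp_all add: leaf_fraction_def ln_div field_simps)
  finally show ?thesis .
qed

(* beta_v(j): the maximizer of (iii) is lambda*_v times this profile *)
definition maximizer_shape :: "nat \<Rightarrow> nat \<Rightarrow> real" where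
  "maximizer_shape v j =
     nleaves v powr \<alpha> v * (\<Prod>u\<in>ancestors v j. nleaves u powr (\<alpha> u - \<alpha> (pa u)))"

lemma maximizer_shape_leaf: "v \<in> V \<Longrightarrow> children v = {} \<Longrightarrow> maximizer_shape v v = 1"
  unfolding maximizer_shape_def by (simp add: ancestors_leaf nleaves_leaf)

lemma maximizer_shape_pos: "v \<in> V \<Longrightarrow> 0 < maximizer_shape v j"
  unfolding maximizer_shape_def anc_def by (intro mult_pos_pos prod_pos nleaves_powr_pos) auto

lemma maximizer_shape_child:
  assumes w: "w \<in> children v" and j: "j \<in> leaves w"
  shows "maximizer_shape v j = leaf_fraction v w powr (- \<alpha> v) * maximizer_shape w j"
proof -
  have dv: "0 < nleaves v" and dw: "0 < nleaves w"
    using nleaves_pos child_in_V[OF w] parent_in_V_of_child[OF w] by auto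
  have "leaf_fraction v w powr (- \<alpha> v) = nleaves v powr \<alpha> v * nleaves w powr (- \<alpha> v)"
    using dv dw by (simp add: leaf_fraction_def powr_divide powr_minus_divide)
  moreover have "w \<notin> ancestors w j" unfolding anc_def by simp
  ultimately show ?thesis
    using maximizer_shape_leaf[OF conjunct1[OF leaf_of_leaves[OF j]]] leaf_of_leaves[OF j]
    unfolding maximizer_shape_def ancestors_child[OF w j]
    by (auto simp: finite_ancestors parent_of_child[OF w] powr_diff powr_minus_divide
        nleaves_leaf mult_ac divide_inverse)
qed

definition ln_geomean :: "nat \<Rightarrow> (nat \<Rightarrow> real) \<Rightarrow> real" where
  "ln_geomean v x = (\<Sum>j\<in>leaves v. ln (x j)) / nleaves v"

lemma ln_geomean_leaf: "v \<in> V \<Longrightarrow> children v = {} \<Longrightarrow> ln_geomean v x = ln (x v)"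
  unfolding ln_geomean_def by (simp add: leaves_leaf nleaves_leaf)

lemma ln_lstar_geomean_internal:
  assumes "v \<in> V" "children v \<noteq> {}"
  shows "ln (lam_star v) + ln_geomean v x = (\<Sum>w\<in>children v. leaf_fraction v w *
           (ln (lam_star w) + ln_geomean w x + \<alpha> v * ln (leaf_fraction v w)))"
proof -
  have "leaf_fraction v w * ln_geomean w x = (\<Sum>j\<in>leaves w. ln (x j)) / nleaves v"
    if "w \<in> children v" for w
    using nleaves_pos[OF child_in_V[OF that]] by (simp add: leaf_fraction_def ln_geomean_def)
  then have "ln_geomean v x = (\<Sum>w\<in>children v. leaf_fraction v w * ln_geomean w x)"
    unfolding ln_geomean_def sum_over_leaves_internal[OF assms]
    by (simp add: sum_divide_distrib)
  then show ?thesis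
    unfolding ln_lstar_internal[OF assms] by (simp add: algebra_simps sum.distrib)
qed

lemma ln_tail_cop_le:
  "v \<in> V \<Longrightarrow> \<forall>j\<in>leaves v. 0 < x j \<Longrightarrow> ln (Lam v x) \<le> ln (lam_star v) + ln_geomean v x"
proof (induction v rule: tree_induct)
  case (leaf v)
  then show ?case by (simp add: tail_cop_leaf lstar_leaf ln_geomean_leaf)
next
  case (internal v)
  let ?c = "leaf_fraction v"
  have x_pos: "\<forall>j\<in>leaves w. 0 < x j" if "w \<in> children v" for w
    using internal.prems leaves_child_subset[OF that] by blast
  have "ln (Lam v x) \<le> (\<Sum>w\<in>children v. ?c w * (ln (Lam w x) + \<alpha> v * ln (?c w)))"
    unfolding tail_cop_internal[OF internal.hyps]
    using finite_children leaf_fraction_pos sum_leaf_fraction[OF internal.hyps]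
      alpha_pos_internal[OF internal.hyps] tail_cop_pos[OF child_in_V x_pos]
    by (rule ln_power_mean_le(1))
  also have "\<dots> \<le> (\<Sum>w\<in>children v. ?c w * (ln (lam_star w) + ln_geomean w x + \<alpha> v * ln (?c w)))"
    using internal.IH[OF _ x_pos] leaf_fraction_pos
    by (intro sum_mono mult_left_mono) (auto simp: less_imp_le)
  finally show ?case unfolding ln_lstar_geomean_internal[OF internal.hyps] .
qed

lemma ln_tail_cop_eq_imp_shape:
  "v \<in> V \<Longrightarrow> \<forall>j\<in>leaves v. 0 < x j \<Longrightarrow> ln (Lam v x) = ln (lam_star v) + ln_geomean v x
    \<Longrightarrow> j \<in> leaves v \<Longrightarrow> x j = Lam v x * maximizer_shape v j"
proof (induction v arbitrary: j rule: tree_induct)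
  case (leaf v)
  then show ?case by (simp add: tail_cop_leaf leaves_leaf maximizer_shape_leaf)
next
  case (internal v)
  let ?c = "leaf_fraction v"
  let ?A = "\<lambda>w. ?c w * (ln (Lam w x) + \<alpha> v * ln (?c w))"
  let ?B = "\<lambda>w. ?c w * (ln (lam_star w) + ln_geomean w x + \<alpha> v * ln (?c w))"
  obtain w where w: "w \<in> children v" "j \<in> leaves w"
    using internal.prems(3) leaves_internal[OF internal.hyps] by blast
  have x_pos: "\<forall>j\<in>leaves w. 0 < x j" if "w \<in> children v" for w
    using internal.prems(1) leaves_child_subset[OF that] by blast
  note power_mean_hyps = finite_children leaf_fraction_pos sum_leaf_fraction[OF internal.hyps]
    alpha_pos_internal[OF internal.hyps] tail_cop_pos[OF child_in_V x_pos]
  have A_le_B: "?A u \<le> ?B u" if "u \<in> children v" for u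
    using ln_tail_cop_le[OF child_in_V[OF that] x_pos[OF that]] leaf_fraction_pos[OF that] by simp
  have "ln (Lam v x) \<le> sum ?A (children v)"
    unfolding tail_cop_internal[OF internal.hyps] using power_mean_hyps by (rule ln_power_mean_le(1))
  moreover have "sum ?A (children v) \<le> sum ?B (children v)" using A_le_B by (rule sum_mono)
  moreover have "sum ?B (children v) = ln (Lam v x)"
    unfolding internal.prems(2) ln_lstar_geomean_internal[OF internal.hyps] ..
  ultimately have A_eq: "ln (Lam v x) = sum ?A (children v)"
    and A_eq_B: "sum ?A (children v) = sum ?B (children v)"
    by linarith+
  have "?A w = ?B w" using sum_mono_inv[OF A_eq_B A_le_B w(1) finite_children] .
  then have "ln (Lam w x) = ln (lam_star w) + ln_geomean w x"
    using leaf_fraction_pos[OF w(1)] by simp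
  then have "x j = Lam w x * maximizer_shape w j"
    using internal.IH[OF w(1) x_pos[OF w(1)]] w(2) by blast
  also have "Lam w x = Lam v x * ?c w powr (- \<alpha> v)"
    using power_mean_hyps A_eq[unfolded tail_cop_internal[OF internal.hyps]] w(1)
    unfolding tail_cop_internal[OF internal.hyps] by (rule ln_power_mean_le(2))
  finally show ?case by (simp add: maximizer_shape_child[OF w] mult_ac)
qed

lemma tail_cop_scaled_shape:
  "v \<in> V \<Longrightarrow> 0 < k \<Longrightarrow> \<forall>j\<in>leaves v. x j = k * maximizer_shape v j \<Longrightarrow> Lam v x = k"
proof (induction v arbitrary: k rule: tree_induct)
  case (leaf v)
  then show ?case by (simp add: tail_cop_leaf leaves_leaf maximizer_shape_leaf)
next
  case (internal v)
  let ?c = "leaf_fraction v"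
  have "Lam w x = k * ?c w powr (- \<alpha> v)" if w: "w \<in> children v" for w
    using internal.IH[OF w] internal.prems leaves_child_subset[OF w] leaf_fraction_pos[OF w]
    by (simp add: maximizer_shape_child[OF w] subset_iff mult_ac)
  then show ?case
    unfolding tail_cop_internal[OF internal.hyps]
    using power_mean_of_scaled_weights[OF leaf_fraction_pos sum_leaf_fraction[OF internal.hyps]
        alpha_pos_internal[OF internal.hyps] internal.prems(1)]
    by simp
qed

lemma sum_ln_maximizer_shape:
  "v \<in> V \<Longrightarrow> (\<Sum>j\<in>leaves v. ln (maximizer_shape v j)) = - nleaves v * ln (lam_star v)"
proof (induction v rule: tree_induct)
  case (leaf v)
  then show ?case by (simp add: leaves_leaf maximizer_shape_leaf lstar_leaf)
next
  case (internal v)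
  let ?c = "leaf_fraction v"
  have "(\<Sum>j\<in>leaves w. ln (maximizer_shape v j))
      = - nleaves v * (?c w * (ln (lam_star w) + \<alpha> v * ln (?c w)))" if w: "w \<in> children v" for w
  proof -
    have "ln (maximizer_shape v j) = ln (maximizer_shape w j) - \<alpha> v * ln (?c w)"
      if "j \<in> leaves w" for j
      using leaf_fraction_pos[OF w] maximizer_shape_pos[OF child_in_V[OF w], of j]
      by (simp add: maximizer_shape_child[OF w that] ln_mult ln_powr)
    then have "(\<Sum>j\<in>leaves w. ln (maximizer_shape v j))
        = (\<Sum>j\<in>leaves w. ln (maximizer_shape w j) - \<alpha> v * ln (?c w))"
      by simp
    then show ?thesis
      using internal.IH[OF w] nleaves_pos[OF internal.hyps(1)]
      by (simp add: sum_subtractf dv_def[symmetric] leaf_fraction_def algebra_simps)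
  qed
  then show ?case
    unfolding sum_over_leaves_internal[OF internal.hyps] ln_lstar_internal[OF internal.hyps]
    by (simp add: sum_distrib_left)
qed

lemma ln_lstar_closed_form:
  "v \<in> V \<Longrightarrow> nleaves v * (ln (lam_star v) + \<alpha> v * ln (nleaves v)) =
     (\<Sum>u\<in>internal_desc v - {v}. (\<alpha> (pa u) - \<alpha> u) * nleaves u * ln (nleaves u))"
proof (induction v rule: tree_induct)
  case (leaf v)
  then show ?case by (simp add: internal_desc_leaf lstar_leaf nleaves_leaf)
next
  case (internal v)
  define f where "f u = (\<alpha> (pa u) - \<alpha> u) * nleaves u * ln (nleaves u)" for u
  have "(\<Sum>u\<in>internal_desc w. f u) = nleaves w * (ln (lam_star w) + \<alpha> v * ln (nleaves w))"
    if w: "w \<in> children v" for w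
  proof -
    have "(\<Sum>u\<in>internal_desc w. f u) = f w + (\<Sum>u\<in>internal_desc w - {w}. f u)"
    proof (cases "children w = {}")
      case True
      then show ?thesis
        using child_in_V[OF w] by (simp add: internal_desc_leaf nleaves_leaf f_def)
    qed (simp add: sum.remove[OF finite_internal_desc] self_in_internal_desc child_in_V[OF w])
    then show ?thesis
      using internal.IH[OF w] parent_of_child[OF w] by (simp add: f_def algebra_simps)
  qed
  moreover have "nleaves v * (ln (lam_star v) + \<alpha> v * ln (nleaves v))
      = (\<Sum>w\<in>children v. nleaves w * (ln (lam_star w) + \<alpha> v * ln (nleaves w)))"
  proof -
    have "nleaves v * ln (lam_star v) = (\<Sum>w\<in>children v.
        nleaves w * (ln (lam_star w) + \<alpha> v * ln (nleaves w)) - nleaves w * (\<alpha> v * ln (nleaves v)))"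
      unfolding ln_lstar_internal[OF internal.hyps] sum_distrib_left
      using nleaves_pos[OF internal.hyps(1)] nleaves_pos[OF child_in_V]
      by (intro sum.cong) (simp_all add: leaf_fraction_def ln_div field_simps)
    also have "\<dots> = (\<Sum>w\<in>children v. nleaves w * (ln (lam_star w) + \<alpha> v * ln (nleaves w)))
        - nleaves v * (\<alpha> v * ln (nleaves v))"
      by (simp add: sum_subtractf nleaves_internal[OF internal.hyps] sum_distrib_right)
    finally show ?thesis by (simp add: algebra_simps)
  qed
  ultimately show ?case
    unfolding sum_internal_desc_minus_self[OF internal.hyps(1)] f_def[symmetric] by simp
qed

lemma feasible_sum_ln:
  assumes "feasible_at v b"
  shows "(\<Sum>j\<in>leaves v. ln (b j)) = 0"
proof -
  have "ln (\<Prod>j\<in>leaves v. b j) = (\<Sum>j\<in>leaves v. ln (b j))"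
    using assms unfolding feasible_def by (intro ln_prod finite_leaves) auto
  then show ?thesis using assms unfolding feasible_def by simp
qed

lemma tail_cop_feasible_le: "v \<in> V \<Longrightarrow> feasible_at v b \<Longrightarrow> Lam v b \<le> lam_star v"
  using ln_tail_cop_le[of v b] feasible_sum_ln[of v b] tail_cop_pos[of v b] lstar_pos[of v]
  unfolding feasible_def ln_geomean_def by simp

lemma feasible_maximizer:
  assumes "v \<in> V"
  shows "feasible_at v (\<lambda>j. lam_star v * maximizer_shape v j)"
proof -
  have pos: "0 < lam_star v * maximizer_shape v j" for j
    using lstar_pos maximizer_shape_pos assms by simp
  have "ln (\<Prod>j\<in>leaves v. lam_star v * maximizer_shape v j)
      = (\<Sum>j\<in>leaves v. ln (lam_star v * maximizer_shape v j))"
    using pos by (intro ln_prod finite_leaves) (metis less_irrefl)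
  also have "\<dots> = (\<Sum>j\<in>leaves v. ln (lam_star v) + ln (maximizer_shape v j))"
    using lstar_pos[OF assms] maximizer_shape_pos[OF assms] by (simp add: ln_mult_pos)
  also have "\<dots> = nleaves v * ln (lam_star v) + (\<Sum>j\<in>leaves v. ln (maximizer_shape v j))"
    by (simp add: sum.distrib dv_def)
  also have "\<dots> = 0" by (simp add: sum_ln_maximizer_shape[OF assms])
  finally show ?thesis
    unfolding feasible_def using pos by (simp add: prod_pos)
qed

lemma tail_cop_maximizer: "v \<in> V \<Longrightarrow> Lam v (\<lambda>j. lam_star v * maximizer_shape v j) = lam_star v"
  using lstar_pos by (intro tail_cop_scaled_shape) auto

lemma mtcm_eq_lstar:
  assumes "v \<in> V"
  shows "mtcm V r pa d \<alpha> v = lam_star v"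
  unfolding mtcm_def
proof (rule cSup_eq_maximum)
  show "lam_star v \<in> {Lam v b |b. feasible_at v b}"
    using feasible_maximizer[OF assms] tail_cop_maximizer[OF assms] by force
  show "y \<le> lam_star v" if "y \<in> {Lam v b |b. feasible_at v b}" for y
    using that tail_cop_feasible_le[OF assms] by blast
qed

lemma maximizer_eq_shape:
  assumes "v \<in> V" "feasible_at v b" "Lam v b = mtcm V r pa d \<alpha> v" "j \<in> leaves v"
  shows "b j = lam_star v * maximizer_shape v j"
  using ln_tail_cop_eq_imp_shape[of v b j] assms mtcm_eq_lstar[OF assms(1)] feasible_sum_ln[OF assms(2)]
  unfolding feasible_def ln_geomean_def by simp

lemma lstar_closed_form:
  assumes "v \<in> V"
  shows "lam_star v = nleaves v powr (- \<alpha> v) *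
    (\<Prod>u\<in>internal_desc v - {v}. nleaves u powr ((\<alpha> (pa u) - \<alpha> u) * nleaves u / nleaves v))"
    (is "_ = _ * (\<Prod>u\<in>?I. nleaves u powr ?e u)")
proof -
  have factor_pos: "0 < nleaves u powr ?e u" if "u \<in> ?I" for u
    using that nleaves_powr_pos unfolding internal_sub_def internal_def by simp
  have "ln (\<Prod>u\<in>?I. nleaves u powr ?e u) = (\<Sum>u\<in>?I. ln (nleaves u powr ?e u))"
    by (intro ln_prod finite_Diff finite_internal_desc) (use factor_pos in fastforce)
  also have "\<dots> = (\<Sum>u\<in>?I. (\<alpha> (pa u) - \<alpha> u) * nleaves u * ln (nleaves u)) / nleaves v"
    unfolding sum_divide_distrib using factor_pos by (intro sum.cong) (auto simp: ln_powr)
  also have "\<dots> = ln (lam_star v) + \<alpha> v * ln (nleaves v)"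
    using ln_lstar_closed_form[OF assms] nleaves_pos[OF assms] by (simp add: field_simps)
  moreover have "0 < (\<Prod>u\<in>?I. nleaves u powr ?e u)"
    using factor_pos by (rule prod_pos)
  ultimately have "ln (nleaves v powr (- \<alpha> v) * (\<Prod>u\<in>?I. nleaves u powr ?e u)) = ln (lam_star v)"
    using nleaves_pos[OF assms] by (simp add: ln_mult ln_powr)
  then show ?thesis
    using lstar_pos[OF assms] nleaves_pos[OF assms] \<open>0 < (\<Prod>u\<in>?I. _)\<close> by simp
qed

end

theorem theorem4p6:
  fixes V :: "nat set" and r :: nat and pa :: "nat \<Rightarrow> nat" and d :: nat
    and \<psi> :: "nat \<Rightarrow> real \<Rightarrow> real" and \<alpha> :: "nat \<Rightarrow> real"
  assumes tree: "is_rooted_tree V r pa d"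
    and gens: "\<forall>v \<in> internal V d. Psi_inf (\<psi> v)"
    and alpha_pos: "\<forall>v \<in> internal V d. 0 < \<alpha> v"
    and regvar: "\<forall>v \<in> internal V d. regularly_varying (\<psi> v) (- \<alpha> v)"
    and nesting: "\<forall>v \<in> internal V d - {r}. nesting_cond (\<psi> (pa v)) (\<psi> v)"
  shows
    "\<forall>v \<in> internal V d.
       \<comment> \<open>(i)\<close>
       mtcm V r pa d \<alpha> v = lstar V r pa d \<alpha> v \<and>
       \<comment> \<open>(ii)\<close>
       lstar V r pa d \<alpha> v =
         dv V r pa d v powr (- \<alpha> v) *
         (\<Prod>w \<in> internal_sub V r pa d v - {v}.
            dv V r pa d w powr ((\<alpha> (pa w) - \<alpha> w) * dv V r pa d w / dv V r pa d v)) \<and>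
       \<comment> \<open>(iii) a maximizer exists, and every maximizer has the stated coordinates\<close>
       (\<exists>b. feasible V r pa d v b \<and> tail_cop V r pa \<alpha> v b = mtcm V r pa d \<alpha> v) \<and>
       (\<forall>b. feasible V r pa d v b \<and> tail_cop V r pa \<alpha> v b = mtcm V r pa d \<alpha> v \<longrightarrow>
          (\<forall>j \<in> le V r pa d v.
             b j = lstar V r pa d \<alpha> v * dv V r pa d v powr (\<alpha> v) *
                   (\<Prod>w \<in> anc V r pa v j. dv V r pa d w powr (\<alpha> w - \<alpha> (pa w)))))"
proof (intro ballI conjI)
  \<comment> \<open>\<open>gens\<close>, \<open>regvar\<close> and \<open>nesting\<close> are what make \<open>\<Lambda>\<^sub>v\<close> the tail copula of \<open>C\<^sub>v\<close>;
     the claims concern the recursion itself and do not use them\<close>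
  interpret tail_copula_tree V r pa d \<alpha> using tree alpha_pos by unfold_locales
  fix v assume "v \<in> internal V d"
  then have v: "v \<in> V" by (simp add: internal_def)
  show "mtcm V r pa d \<alpha> v = lam_star v" by (rule mtcm_eq_lstar[OF v])
  show "lam_star v = nleaves v powr (- \<alpha> v) *
    (\<Prod>w\<in>internal_desc v - {v}. nleaves w powr ((\<alpha> (pa w) - \<alpha> w) * nleaves w / nleaves v))"
    by (rule lstar_closed_form[OF v])
  show "\<exists>b. feasible_at v b \<and> Lam v b = mtcm V r pa d \<alpha> v"
    using feasible_maximizer[OF v] tail_cop_maximizer[OF v] mtcm_eq_lstar[OF v] by auto
  show "\<forall>b. feasible_at v b \<and> Lam v b = mtcm V r pa d \<alpha> v \<longrightarrow> (\<forall>j\<in>leaves v.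
      b j = lam_star v * nleaves v powr \<alpha> v *
            (\<Prod>w\<in>ancestors v j. nleaves w powr (\<alpha> w - \<alpha> (pa w))))"
    using maximizer_eq_shape[OF v] by (simp add: maximizer_shape_def mult.assoc)
qed

end
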